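(* Let $m\ge1$, $R=\mathbb C[y_1,\dots,y_m]/(y_1^2,\dots,y_m^2)$ and $\omega=y_1+\dots+y_m$. The elements $$\rho_{j,T}:=\frac1{j!}\,\omega^jV_T(y_1,\dots,y_m),\qquad T\in\mathbf T_{m,l},\ 0\le l\le\lfloor m/2\rfloor,\ 0\le j\le m-2l,$$ form a basis of $R$, and for each $l$ those with $T\in\mathbf T_{m,l}$ form a basis of the isotypic component $R_l=\bigoplus_{j=0}^{m-2l}\omega^j\operatorname{span}\{V_T:T\in\mathbf T_{m,l}\}$.
   Context: $\mathbf T_{m,l}$ is the set of standard Young tableaux of shape $(2^l,1^{m-2l})$ ($l$ rows of length 2, then $m-2l$ rows of length 1) filled with $1,\dots,m$; row $i\le l$ contains $a_{i,1}<a_{i,2}$. For $T\in\mathbf T_{m,l}$, $V_T(y_1,\dots,y_m):=\prod_{i=1}^l(y_{a_{i,1}}-y_{a_{i,2}})$. *)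

theory Defs
  imports Complex_Main
begin

text \<open>Concrete model of R = C[y_1..y_m]/(y_1^2,...,y_m^2): an element is the coefficient
function on squarefree monomials y_S (S a subset of {1..m}); y_S * y_T = y_(S union T)
if S, T disjoint and 0 otherwise.\<close>

definition Rm :: "nat \<Rightarrow> (nat set \<Rightarrow> complex) set" where
  "Rm m = {f. \<forall>S. f S \<noteq> 0 \<longrightarrow> S \<subseteq> {1..m}}"

definition rmul :: "(nat set \<Rightarrow> complex) \<Rightarrow> (nat set \<Rightarrow> complex) \<Rightarrow> (nat set \<Rightarrow> complex)" where
  "rmul f g = (\<lambda>S. \<Sum>A\<in>Pow S. f A * g (S - A))"

definition rone :: "nat set \<Rightarrow> complex" where
  "rone = (\<lambda>S. if S = {} then 1 else 0)"

definition yv :: "nat \<Rightarrow> nat set \<Rightarrow> complex" where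
  "yv i = (\<lambda>S. if S = {i} then 1 else 0)"

definition rpow :: "(nat set \<Rightarrow> complex) \<Rightarrow> nat \<Rightarrow> (nat set \<Rightarrow> complex)" where
  "rpow f j = (rmul f ^^ j) rone"

definition omega :: "nat \<Rightarrow> nat set \<Rightarrow> complex" where
  "omega m = (\<lambda>S. \<Sum>i=1..m. yv i S)"

text \<open>Standard Young tableaux of shape (2^l,1^(m-2l)) filled with 1..m, as lists of rows.\<close>
definition tabl :: "nat \<Rightarrow> nat \<Rightarrow> nat list list set" where
  "tabl m l = {T. length T = m - l
     \<and> (\<forall>i<length T. length (T!i) = (if i < l then 2 else 1))
     \<and> distinct (concat T) \<and> set (concat T) = {1..m}
     \<and> (\<forall>i<l. T!i!0 < T!i!1)
     \<and> (\<forall>i k. Suc i < length T \<and> k < length (T!(Suc i)) \<longrightarrow> T!i!k < T!(Suc i)!k)}"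

definition VT :: "nat \<Rightarrow> nat list list \<Rightarrow> nat set \<Rightarrow> complex" where
  "VT l T = foldr (\<lambda>i acc. rmul (\<lambda>S. yv (T!i!0) S - yv (T!i!1) S) acc) [0..<l] rone"

definition rho :: "nat \<Rightarrow> nat \<times> nat \<times> nat list list \<Rightarrow> nat set \<Rightarrow> complex" where
  "rho m = (\<lambda>(l, j, T). (\<lambda>S. (1 / fact j) * rmul (rpow (omega m) j) (VT l T) S))"

definition lincomb :: "('i \<Rightarrow> complex) \<Rightarrow> 'i set \<Rightarrow> ('i \<Rightarrow> nat set \<Rightarrow> complex) \<Rightarrow> nat set \<Rightarrow> complex" where
  "lincomb c I v = (\<lambda>S. \<Sum>k\<in>I. c k * v k S)"

definition cspan :: "'i set \<Rightarrow> ('i \<Rightarrow> nat set \<Rightarrow> complex) \<Rightarrow> (nat set \<Rightarrow> complex) set" where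
  "cspan I v = {lincomb c I v | c. True}"

definition lin_indep :: "'i set \<Rightarrow> ('i \<Rightarrow> nat set \<Rightarrow> complex) \<Rightarrow> bool" where
  "lin_indep I v \<longleftrightarrow> finite I \<and> (\<forall>c. lincomb c I v = (\<lambda>S. 0) \<longrightarrow> (\<forall>k\<in>I. c k = 0))"

definition is_basis_of :: "'i set \<Rightarrow> ('i \<Rightarrow> nat set \<Rightarrow> complex) \<Rightarrow> (nat set \<Rightarrow> complex) set \<Rightarrow> bool" where
  "is_basis_of I v W \<longleftrightarrow> v ` I \<subseteq> W \<and> lin_indep I v \<and> cspan I v = W"

definition idx :: "nat \<Rightarrow> (nat \<times> nat \<times> nat list list) set" where
  "idx m = {(l, j, T). l \<le> m div 2 \<and> j \<le> m - 2*l \<and> T \<in> tabl m l}"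

definition idx_l :: "nat \<Rightarrow> nat \<Rightarrow> (nat \<times> nat \<times> nat list list) set" where
  "idx_l m l = {(l', j, T). l' = l \<and> j \<le> m - 2*l \<and> T \<in> tabl m l}"

definition Rl :: "nat \<Rightarrow> nat \<Rightarrow> (nat set \<Rightarrow> complex) set" where
  "Rl m l = cspan {(j, T). j \<le> m - 2*l \<and> T \<in> tabl m l}
              (\<lambda>(j, T). rmul (rpow (omega m) j) (VT l T))"

end

theory Submission
  imports Defs "HOL-Library.Function_Algebras"
begin

text \<open>Write \<open>a\<^sub>i < b\<^sub>i\<close> for the entries of the \<open>i\<close>-th two-box row of \<open>T\<close>. Then the coefficient of
  \<open>y\<^sub>S\<close> in \<open>\<rho>\<^bsub>j,T\<^esub>\<close> is \<open>\<plusminus>1\<close> if \<open>S\<close> meets every pair \<open>{a\<^sub>i, b\<^sub>i}\<close> in exactly one element and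
  contains exactly \<open>j\<close> entries of one-box rows, and \<open>0\<close> otherwise. Multiplication by \<open>\<omega>\<close> and the
  operator \<open>F = \<Sum>\<^sub>x \<partial>/\<partial>y\<^sub>x\<close> act on these as on an \<open>sl\<^sub>2\<close>-string:
  \<open>\<omega> \<rho>\<^sub>j = (j + 1) \<rho>\<^bsub>j+1\<^esub>\<close>, \<open>F \<rho>\<^sub>j = (m - 2l - j + 1) \<rho>\<^bsub>j-1\<^esub>\<close> and \<open>F \<rho>\<^sub>0 = 0\<close>.
  Applying \<open>F\<^sup>j\<close> to a vanishing linear combination, downward induction on \<open>j\<close> reduces linear
  independence to that of the \<open>V\<^sub>T\<close>. These are independent because \<open>y\<^bsub>b\<^sub>1\<^esub>\<cdots>y\<^bsub>b\<^sub>l\<^esub>\<close> is the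
  monomial of \<open>V\<^sub>T\<close> with the largest index sum, and the second column determines \<open>T\<close>.
  Spanning follows by counting: inserting the entry \<open>m + 1\<close> in two ways doubles the number of
  indices, so there are at least \<open>2\<^sup>m = dim R\<close> of them.\<close>

section \<open>Multiplication in the ring of squarefree monomials\<close>

lemma sum_fun_apply: "(\<Sum>w\<in>A. F w) S = (\<Sum>w\<in>A. F w S)"
  by (induct A rule: infinite_finite_induct) auto

lemma rmul_infinite: "infinite S \<Longrightarrow> rmul f g S = 0"
  by (simp add: rmul_def)

lemma rmul_yv: "finite S \<Longrightarrow> rmul (yv a) g S = (if a \<in> S then g (S - {a}) else 0)"
  unfolding rmul_def yv_def by (simp add: if_distrib[of "\<lambda>c. c * _"] sum.delta cong: if_cong)

lemma rmul_diff_left: "rmul (\<lambda>S. f S - g S) h = (\<lambda>S. rmul f h S - rmul g h S)"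
  by (simp add: rmul_def fun_eq_iff left_diff_distrib sum_subtractf)

lemma rmul_scale_right: "rmul f (\<lambda>S. c * g S) = (\<lambda>S. c * rmul f g S)"
  by (simp add: rmul_def fun_eq_iff sum_distrib_left algebra_simps)

lemma rmul_omega: "finite S \<Longrightarrow> rmul (omega m) f S = (\<Sum>x\<in>S \<inter> {1..m}. f (S - {x}))"
proof -
  assume fS: "finite S"
  have "rmul (omega m) f S = (\<Sum>i=1..m. rmul (yv i) f S)"
    unfolding rmul_def omega_def by (simp add: sum_distrib_right) (rule sum.swap)
  also have "\<dots> = (\<Sum>i\<in>{1..m}. if i \<in> S then f (S - {i}) else 0)"
    using fS by (simp add: rmul_yv)
  also have "\<dots> = (\<Sum>i\<in>{1..m} \<inter> S. f (S - {i}))"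
    by (rule sum.inter_restrict[symmetric]) simp
  finally show ?thesis by (simp add: Int_commute)
qed

lemma rmul_assoc: "rmul (rmul f g) h = rmul f (rmul g h)"
proof
  fix S
  show "rmul (rmul f g) h S = rmul f (rmul g h) S"
  proof (cases "finite S")
    case False thus ?thesis by (simp add: rmul_def)
  next
    case True
    have diff: "S - B - (A - B) = S - A" if "B \<subseteq> A" "A \<subseteq> S" for A B
      using that by auto
    have "rmul (rmul f g) h S = (\<Sum>(A,B)\<in>Sigma (Pow S) Pow. f B * g (A - B) * h (S - A))"
      by (simp add: rmul_def sum_distrib_right sum.Sigma finite_subset[OF _ True])
    also have "\<dots> = (\<Sum>(B,C)\<in>Sigma (Pow S) (\<lambda>B. Pow (S - B)). f B * g C * h (S - B - C))"
      by (rule sum.reindex_bij_witness[where i="\<lambda>(B,C). (B \<union> C, B)" and j="\<lambda>(A,B). (B, A - B)"])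
        (auto simp: diff)
    also have "\<dots> = rmul f (rmul g h) S"
      by (simp add: rmul_def sum_distrib_left mult.assoc sum.Sigma finite_subset[OF _ True])
    finally show ?thesis .
  qed
qed

lemma rmul_rone_left:
  assumes "\<And>S. infinite S \<Longrightarrow> f S = 0" shows "rmul rone f = f"
proof
  fix S
  show "rmul rone f S = f S"
    using assms by (cases "finite S") (auto simp: rmul_def rone_def if_distrib[of "\<lambda>c. c * _"] cong: if_cong)
qed

lemma rpow_Suc: "rpow f (Suc j) = rmul f (rpow f j)"
  by (simp add: rpow_def)

interpretation coeff_space: vector_space "\<lambda>c (f :: nat set \<Rightarrow> complex) S. c * f S"
  by unfold_locales (simp_all add: fun_eq_iff algebra_simps)

lemma lincomb_image:
  assumes "inj_on v I" shows "lincomb (u \<circ> v) I v = (\<Sum>w\<in>v ` I. (\<lambda>S. u w * w S))"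
  by (simp add: lincomb_def fun_eq_iff sum_fun_apply sum.reindex[OF assms])

lemma lin_indep_inj_on:
  assumes li: "lin_indep I v" shows "inj_on v I"
proof (rule inj_onI, rule ccontr)
  fix k k' assume k: "k \<in> I" "k' \<in> I" "v k = v k'" "k \<noteq> k'"
  define c where "c x = (if x = k then 1 else if x = k' then -1 else 0 :: complex)" for x
  have fin: "finite I" using li by (simp add: lin_indep_def)
  have "lincomb c I v = (\<lambda>S. 0)"
  proof
    fix S
    have "lincomb c I v S = (\<Sum>x\<in>I. (if x = k then v k S else 0) - (if x = k' then v k' S else 0))"
      unfolding lincomb_def by (rule sum.cong) (use k(4) in \<open>auto simp: c_def\<close>)
    also have "\<dots> = 0" using fin k by (simp add: sum_subtractf)
    finally show "lincomb c I v S = 0" .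
  qed
  then have "c k = 0" using li k by (auto simp: lin_indep_def)
  then show False by (simp add: c_def)
qed

lemma lin_indep_independent:
  assumes li: "lin_indep I v" shows "coeff_space.independent (v ` I)"
proof
  assume "coeff_space.dependent (v ` I)"
  moreover have fin: "finite (v ` I)" using li by (simp add: lin_indep_def)
  ultimately obtain u where u: "\<exists>w\<in>v ` I. u w \<noteq> 0" "(\<Sum>w\<in>v ` I. (\<lambda>S. u w * w S)) = 0"
    using coeff_space.dependent_finite by auto
  then have "lincomb (u \<circ> v) I v = (\<lambda>S. 0)"
    by (simp add: lincomb_image[OF lin_indep_inj_on[OF li]] zero_fun_def)
  then have "\<forall>k\<in>I. u (v k) = 0" using li by (auto simp: lin_indep_def)
  then show False using u(1) by auto
qed

lemma span_subset_cspan: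
  assumes "finite I" "inj_on v I" shows "coeff_space.span (v ` I) \<subseteq> cspan I v"
proof
  fix x assume "x \<in> coeff_space.span (v ` I)"
  then obtain u where "x = (\<Sum>w\<in>v ` I. (\<lambda>S. u w * w S))"
    using coeff_space.span_finite assms(1) by auto
  then have "x = lincomb (u \<circ> v) I v" by (simp add: lincomb_image[OF assms(2)])
  then show "x \<in> cspan I v" by (auto simp: cspan_def)
qed

definition monomial :: "nat set \<Rightarrow> nat set \<Rightarrow> complex" where
  "monomial A = (\<lambda>S. if S = A then 1 else 0)"

lemma Rm_subset_span_monomials: "Rm m \<subseteq> coeff_space.span (monomial ` Pow {1..m})"
proof
  fix f assume "f \<in> Rm m"
  then have "f = (\<Sum>A\<in>Pow {1..m}. (\<lambda>S. f A * monomial A S))"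
    by (auto simp: fun_eq_iff sum_fun_apply monomial_def Rm_def if_distrib[of "\<lambda>c. _ * c"] cong: if_cong)
  also have "\<dots> \<in> coeff_space.span (monomial ` Pow {1..m})"
    by (intro coeff_space.span_sum coeff_space.span_scale coeff_space.span_base imageI)
  finally show "f \<in> coeff_space.span (monomial ` Pow {1..m})" .
qed

lemma lin_indep_spans_Rm:
  assumes li: "lin_indep I v" and sub: "v ` I \<subseteq> Rm m" and card: "2 ^ m \<le> card I"
  shows "Rm m \<subseteq> cspan I v"
proof
  fix x assume x: "x \<in> Rm m"
  have fin: "finite I" and inj: "inj_on v I" using li lin_indep_inj_on by (auto simp: lin_indep_def)
  show "x \<in> cspan I v"
  proof (rule ccontr)
    assume "x \<notin> cspan I v"
    then have x_new: "x \<notin> coeff_space.span (v ` I)" using span_subset_cspan[OF fin inj] by blast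
    then have "x \<notin> v ` I" using coeff_space.span_base by blast
    have ind: "coeff_space.independent (insert x (v ` I))"
      by (rule coeff_space.independent_insertI[OF x_new lin_indep_independent[OF li]])
    have "insert x (v ` I) \<subseteq> coeff_space.span (monomial ` Pow {1..m})"
      using x sub Rm_subset_span_monomials by blast
    then have "card (insert x (v ` I)) \<le> card (monomial ` Pow {1..m})"
      using coeff_space.independent_span_bound[OF _ ind] by simp
    also have "\<dots> \<le> 2 ^ m"
      using card_image_le[of "Pow {1..m}" monomial] by (simp add: card_Pow)
    finally show False
      using card \<open>x \<notin> v ` I\<close> fin by (simp add: card_image[OF inj])
  qed
qed

lemma lin_indep_subset:
  assumes li: "lin_indep I v" and J: "J \<subseteq> I" shows "lin_indep J v"
  unfolding lin_indep_def
proof (intro conjI allI impI ballI)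
  show "finite J" using li J finite_subset by (auto simp: lin_indep_def)
next
  fix c k assume c: "lincomb c J v = (\<lambda>S. 0)" and k: "k \<in> J"
  define c' where "c' x = (if x \<in> J then c x else 0)" for x
  have "lincomb c' I v = lincomb c J v"
    using li J by (simp add: lin_indep_def lincomb_def c'_def if_distrib[of "\<lambda>c. c * _"]
        sum.inter_restrict[symmetric] Int_absorb1 cong: if_cong)
  then have "c' k = 0" using li c k J by (auto simp: lin_indep_def)
  then show "c k = 0" using k by (simp add: c'_def)
qed

lemma cspan_base: "finite I \<Longrightarrow> k \<in> I \<Longrightarrow> v k \<in> cspan I v"
  unfolding cspan_def lincomb_def
  by (rule CollectI, rule exI[of _ "\<lambda>x. if x = k then 1 else 0"])
    (simp add: if_distrib[of "\<lambda>c. c * _"] cong: if_cong)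

lemma cspan_subset_Rm: "v ` I \<subseteq> Rm m \<Longrightarrow> cspan I v \<subseteq> Rm m"
proof
  fix f assume sub: "v ` I \<subseteq> Rm m" and "f \<in> cspan I v"
  then obtain c where f: "f = lincomb c I v" by (auto simp: cspan_def)
  show "f \<in> Rm m"
    unfolding Rm_def mem_Collect_eq
  proof (intro allI impI)
    fix S assume "f S \<noteq> 0"
    then obtain k where "k \<in> I" "c k * v k S \<noteq> 0"
      unfolding f lincomb_def by (meson sum.not_neutral_contains_not_neutral)
    then show "S \<subseteq> {1..m}" using sub by (auto simp: Rm_def)
  qed
qed

lemma lin_indep_is_basis_of_cspan: "lin_indep I v \<Longrightarrow> is_basis_of I v (cspan I v)"
  by (auto simp: is_basis_of_def lin_indep_def cspan_base)

lemma cspan_reindex_rescaled: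
  assumes inj: "inj_on h J"
    and w: "\<And>x. x \<in> J \<Longrightarrow> w (h x) = (\<lambda>S. s x * u x S)" and s: "\<And>x. x \<in> J \<Longrightarrow> s x \<noteq> 0"
  shows "cspan (h ` J) w = cspan J u"
proof -
  have lc: "lincomb c (h ` J) w = lincomb (\<lambda>x. c (h x) * s x) J u" for c
    by (simp add: lincomb_def fun_eq_iff sum.reindex[OF inj] w mult.assoc)
  have "lincomb c J u = lincomb (\<lambda>y. c (inv_into J h y) / s (inv_into J h y)) (h ` J) w" for c
    unfolding lc by (simp add: lincomb_def fun_eq_iff inv_into_f_f[OF inj] s)
  then show ?thesis unfolding cspan_def using lc by blast
qed

section \<open>Tableaux\<close>

lemma concat_nth_mem: "i < length xs \<Longrightarrow> k < length (xs!i) \<Longrightarrow> xs!i!k \<in> set (concat xs)"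
  using nth_mem by (fastforce simp: set_concat)

lemma concat_mem_nth: "x \<in> set (concat xs) \<Longrightarrow> \<exists>i<length xs. \<exists>k<length (xs!i). xs!i!k = x"
  by (fastforce simp: set_concat in_set_conv_nth)

lemma distinct_concat_nth_inj:
  "distinct (concat xs) \<Longrightarrow> i < length xs \<Longrightarrow> j < length xs \<Longrightarrow> k < length (xs!i)
   \<Longrightarrow> k' < length (xs!j) \<Longrightarrow> xs!i!k = xs!j!k' \<Longrightarrow> i = j \<and> k = k'"
proof (induct xs arbitrary: i j)
  case (Cons x xs)
  have "set x \<inter> set (concat xs) = {}"
    using Cons.prems(1) by (metis concat.simps(2) distinct_append)
  then have new: "x!k \<noteq> xs!n!k'" if "k < length x" "n < length xs" "k' < length (xs!n)" for k n k'
    using nth_mem[OF that(1)] concat_nth_mem[OF that(2,3)] by (metis disjoint_iff)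
  show ?case
  proof (cases i; cases j)
    fix i' j' assume "i = Suc i'" "j = Suc j'"
    then show ?thesis using Cons by auto
  qed (use Cons new new[THEN not_sym] in \<open>auto simp: nth_eq_iff_index_eq\<close>)
qed simp

lemma finite_tabl: "finite (tabl m l)"
proof (rule finite_subset)
  show "tabl m l \<subseteq> {T. set T \<subseteq> {r. set r \<subseteq> {1..m} \<and> length r \<le> 2} \<and> length T \<le> m}"
  proof
    fix T assume T: "T \<in> tabl m l"
    have "set (concat T) = {1..m}" using T by (simp add: tabl_def)
    moreover have "length r \<le> 2" if "r \<in> set T" for r
      using T that by (auto simp: tabl_def in_set_conv_nth)
    ultimately have "length r \<le> 2 \<and> set r \<subseteq> {1..m}" if "r \<in> set T" for r
      using that by auto
    then show "T \<in> {T. set T \<subseteq> {r. set r \<subseteq> {1..m} \<and> length r \<le> 2} \<and> length T \<le> m}"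
      using T by (auto simp: tabl_def)
  qed
  show "finite {T. set T \<subseteq> {r. set r \<subseteq> {1..m} \<and> length r \<le> 2} \<and> length T \<le> m}"
    by (intro finite_lists_length_le) simp_all
qed

locale tableau =
  fixes m l :: nat and T :: "nat list list"
  assumes T_in_tabl: "T \<in> tabl m l" and two_rows_fit: "2 * l \<le> m"
begin

text \<open>Rows are indexed from \<open>0\<close>; \<open>b i\<close> is meaningful only for the two-box rows \<open>i < l\<close>.\<close>

definition a :: "nat \<Rightarrow> nat" where "a i = T!i!0"
definition b :: "nat \<Rightarrow> nat" where "b i = T!i!1"

definition singles :: "nat set" where "singles = a ` {l..<m-l}"
definition paired :: "nat set" where "paired = (\<Union>i<l. {a i, b i})"
definition second_column :: "nat set" where "second_column = b ` {..<l}"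

lemma length_T: "length T = m - l" using T_in_tabl by (simp add: tabl_def)
lemma length_row: "i < m - l \<Longrightarrow> length (T!i) = (if i < l then 2 else 1)"
  using T_in_tabl by (simp add: tabl_def)
lemma l_less_eq: "l \<le> m - l" using two_rows_fit by simp
lemma distinct_entries: "distinct (concat T)" using T_in_tabl by (simp add: tabl_def)
lemma set_entries: "set (concat T) = {1..m}" using T_in_tabl by (simp add: tabl_def)
lemma a_less_b: "i < l \<Longrightarrow> a i < b i" using T_in_tabl by (simp add: tabl_def a_def b_def)
lemma column_increasing: "Suc i < m - l \<Longrightarrow> k < length (T!Suc i) \<Longrightarrow> T!i!k < T!(Suc i)!k"
  using T_in_tabl by (simp add: tabl_def)

lemma a_in_range: assumes "i < m - l" shows "a i \<in> {1..m}"
proof -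
  have "T!i!0 \<in> set (concat T)"
    using assms length_row[OF assms] length_T by (intro concat_nth_mem) auto
  then show ?thesis by (simp only: a_def set_entries)
qed

lemma b_in_range: assumes "i < l" shows "b i \<in> {1..m}"
proof -
  have "T!i!1 \<in> set (concat T)"
    using assms length_row[of i] length_T l_less_eq by (intro concat_nth_mem) auto
  then show ?thesis by (simp only: b_def set_entries)
qed

lemma a_inj: "i < m - l \<Longrightarrow> i' < m - l \<Longrightarrow> a i = a i' \<Longrightarrow> i = i'"
  using distinct_concat_nth_inj[OF distinct_entries, of i i' 0 0] length_row[of i] length_row[of i'] length_T
  by (simp add: a_def split: if_splits)
lemma b_inj: "i < l \<Longrightarrow> i' < l \<Longrightarrow> b i = b i' \<Longrightarrow> i = i'"
  using distinct_concat_nth_inj[OF distinct_entries, of i i' 1 1] length_row[of i] length_row[of i']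
    length_T l_less_eq by (simp add: b_def)
lemma a_neq_b: "i < m - l \<Longrightarrow> i' < l \<Longrightarrow> a i \<noteq> b i'"
  using distinct_concat_nth_inj[OF distinct_entries, of i i' 0 1] length_row[of i] length_row[of i']
    length_T l_less_eq by (auto simp: a_def b_def split: if_splits)

lemma range_eq_columns: "{1..m} = a ` {..<m-l} \<union> b ` {..<l}"
proof
  show "a ` {..<m - l} \<union> b ` {..<l} \<subseteq> {1..m}" using a_in_range b_in_range by auto
next
  show "{1..m} \<subseteq> a ` {..<m - l} \<union> b ` {..<l}"
  proof
    fix x assume "x \<in> {1..m}"
    then have "x \<in> set (concat T)" by (simp only: set_entries)
    then obtain i k where ik: "i < m - l" "k < length (T!i)" "T!i!k = x"
      using concat_mem_nth length_T by metis
    moreover have "k = 0 \<or> k = 1 \<and> i < l"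
      using ik length_row[of i] by (cases k) (auto split: if_splits)
    ultimately show "x \<in> a ` {..<m - l} \<union> b ` {..<l}"
      by (auto simp: a_def b_def)
  qed
qed

lemma card_singles: "card singles = m - 2 * l"
proof -
  have "inj_on a {l..<m-l}" by (meson a_inj atLeastLessThan_iff inj_onI)
  then show ?thesis by (simp add: singles_def card_image)
qed

lemma range_eq_singles_paired: "{1..m} = singles \<union> paired"
proof -
  have "{..<m-l} = {..<l} \<union> {l..<m-l}" using l_less_eq by auto
  then have "a ` {..<m-l} = a ` {..<l} \<union> singles" by (auto simp: singles_def)
  then show ?thesis using range_eq_columns by (auto simp: paired_def)
qed

lemma single_not_in_pair: "x \<in> singles \<Longrightarrow> i < l \<Longrightarrow> x \<noteq> a i \<and> x \<noteq> b i"
  using a_inj[of _ i] a_neq_b[of _ i] l_less_eq by (fastforce simp: singles_def)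

lemma singles_paired_disjoint: "singles \<inter> paired = {}"
  using single_not_in_pair by (auto simp: paired_def)

lemma pairs_disjoint: "i < l \<Longrightarrow> i' < l \<Longrightarrow> i \<noteq> i' \<Longrightarrow> {a i, b i} \<inter> {a i', b i'} = {}"
  using a_inj[of i i'] b_inj[of i i'] a_neq_b[of i i'] a_neq_b[of i' i] l_less_eq by auto

end

section \<open>The elements \<open>\<omega>\<^sup>j V\<^sub>T\<close> in monomial coordinates\<close>

context tableau
begin

text \<open>Since
  \<open>(y\<^bsub>a\<^esub> + y\<^bsub>b\<^esub>)(y\<^bsub>a\<^esub> - y\<^bsub>b\<^esub>) = 0\<close>, only the variables of one-box rows survive in
  \<open>\<omega>\<^sup>j V\<^sub>T / j!\<close>, whence the formula for \<open>rho_expl j\<close>.\<close>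

definition pair_sign :: "nat \<Rightarrow> nat set \<Rightarrow> complex" where
  "pair_sign i S = (if a i \<in> S \<and> b i \<notin> S then 1 else if b i \<in> S \<and> a i \<notin> S then -1 else 0)"

definition rho_expl :: "nat \<Rightarrow> nat set \<Rightarrow> complex" where
  "rho_expl j S = (if S \<subseteq> {1..m} \<and> card (S \<inter> singles) = j then \<Prod>i<l. pair_sign i S else 0)"

lemma rho_expl_in_Rm: "rho_expl j \<in> Rm m"
  by (simp add: Rm_def rho_expl_def)

lemma rho_expl_infinite: "infinite S \<Longrightarrow> rho_expl j S = 0"
  using finite_subset[of S "{1..m}"] by (auto simp: rho_expl_def)

lemma pair_sign_remove: "x \<notin> {a i, b i} \<Longrightarrow> pair_sign i (S - {x}) = pair_sign i S"
  by (auto simp: pair_sign_def)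

lemma pair_sign_insert: "x \<notin> {a i, b i} \<Longrightarrow> pair_sign i (insert x S) = pair_sign i S"
  by (auto simp: pair_sign_def)

lemma sum_pair_sign_remove: "i < l \<Longrightarrow> (\<Sum>x\<in>S \<inter> {a i, b i}. pair_sign i (S - {x})) = 0"
  using a_less_b[of i] by (cases "a i \<in> S"; cases "b i \<in> S") (auto simp: pair_sign_def Int_insert_right)

lemma sum_pair_sign_insert: "i < l \<Longrightarrow> (\<Sum>x\<in>{a i, b i} - S. pair_sign i (insert x S)) = 0"
  using a_less_b[of i] by (cases "a i \<in> S"; cases "b i \<in> S") (auto simp: pair_sign_def insert_Diff_if)

lemma sum_prod_pair_sign_eq_0:
  assumes X: "\<And>i. i < l \<Longrightarrow> X i \<subseteq> {a i, b i}"
    and local: "\<And>x k. x \<notin> {a k, b k} \<Longrightarrow> pair_sign k (\<phi> x) = pair_sign k S"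
    and cancel: "\<And>i. i < l \<Longrightarrow> (\<Sum>x\<in>X i. pair_sign i (\<phi> x)) = 0"
  shows "(\<Sum>x\<in>(\<Union>i<l. X i). \<Prod>k<l. pair_sign k (\<phi> x)) = 0"
proof -
  have fin: "finite (X i)" if "i < l" for i using X[OF that] finite_subset by blast
  have "(\<Sum>x\<in>(\<Union>i<l. X i). \<Prod>k<l. pair_sign k (\<phi> x)) = (\<Sum>i<l. \<Sum>x\<in>X i. \<Prod>k<l. pair_sign k (\<phi> x))"
  proof (rule sum.UNION_disjoint)
    show "\<forall>i\<in>{..<l}. \<forall>j\<in>{..<l}. i \<noteq> j \<longrightarrow> X i \<inter> X j = {}"
    proof (intro ballI impI)
      fix i j assume "i \<in> {..<l}" "j \<in> {..<l}" "i \<noteq> j"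
      then show "X i \<inter> X j = {}" using X[of i] X[of j] pairs_disjoint[of i j] by auto
    qed
  qed (simp_all add: fin)
  also have "\<dots> = (\<Sum>i<l. (\<Sum>x\<in>X i. pair_sign i (\<phi> x)) * (\<Prod>k\<in>{..<l}-{i}. pair_sign k S))"
  proof (rule sum.cong[OF refl])
    fix i assume i: "i \<in> {..<l}"
    have "(\<Prod>k<l. pair_sign k (\<phi> x)) = pair_sign i (\<phi> x) * (\<Prod>k\<in>{..<l}-{i}. pair_sign k S)"
      if "x \<in> X i" for x
    proof -
      have "(\<Prod>k\<in>{..<l}-{i}. pair_sign k (\<phi> x)) = (\<Prod>k\<in>{..<l}-{i}. pair_sign k S)"
        using that X[of i] pairs_disjoint[of i] i by (intro prod.cong refl local) auto
      then show ?thesis using i by (simp add: prod.remove)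
    qed
    then show "(\<Sum>x\<in>X i. \<Prod>k<l. pair_sign k (\<phi> x))
        = (\<Sum>x\<in>X i. pair_sign i (\<phi> x)) * (\<Prod>k\<in>{..<l}-{i}. pair_sign k S)"
      by (simp add: sum_distrib_right)
  qed
  also have "\<dots> = 0" using cancel by simp
  finally show ?thesis .
qed

lemma rmul_omega_rho_expl: "rmul (omega m) (rho_expl j) S = of_nat (Suc j) * rho_expl (Suc j) S"
proof (cases "finite S \<and> S \<subseteq> {1..m}")
  case False
  show ?thesis
  proof (cases "finite S")
    case fS: True
    with False obtain y where "y \<in> S" "y \<notin> {1..m}" by blast
    then have "rho_expl j (S - {x}) = 0" if "x \<in> S \<inter> {1..m}" for x
      using that by (auto simp: rho_expl_def)
    then show ?thesis using False fS by (simp add: rmul_omega rho_expl_def)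
  qed (simp add: rmul_infinite rho_expl_infinite)
next
  case True
  then have fS: "finite S" and S_range: "S \<subseteq> {1..m}" by auto
  define P where "P = (\<Prod>i<l. pair_sign i S)"
  define c where "c = card (S \<inter> singles)"
  have S_split: "S \<inter> {1..m} = (S \<inter> singles) \<union> (\<Union>i<l. S \<inter> {a i, b i})"
    using S_range range_eq_singles_paired by (auto simp: paired_def)
  have "rho_expl j (S - {x}) = (if c = Suc j then P else 0)" if x: "x \<in> S \<inter> singles" for x
  proof -
    have "(S - {x}) \<inter> singles = (S \<inter> singles) - {x}" by auto
    then have "card ((S - {x}) \<inter> singles) = c - 1" "0 < c"
      using x fS by (auto simp: c_def card_gt_0_iff)
    moreover have "x \<notin> {a i, b i}" if "i < l" for i using x single_not_in_pair that by blast
    ultimately show ?thesis using S_range by (auto simp: rho_expl_def P_def pair_sign_remove)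
  qed
  then have singles_part: "(\<Sum>x\<in>S \<inter> singles. rho_expl j (S - {x})) = of_nat c * (if c = Suc j then P else 0)"
    by (simp add: c_def)
  have "rho_expl j (S - {x}) = (if c = j then \<Prod>i<l. pair_sign i (S - {x}) else 0)"
    if "x \<in> (\<Union>i<l. S \<inter> {a i, b i})" for x
  proof -
    have "x \<notin> singles" using that single_not_in_pair by blast
    then have "(S - {x}) \<inter> singles = S \<inter> singles" by auto
    then show ?thesis using S_range by (auto simp: rho_expl_def c_def Int_Diff)
  qed
  then have "(\<Sum>x\<in>(\<Union>i<l. S \<inter> {a i, b i}). rho_expl j (S - {x}))
      = (if c = j then \<Sum>x\<in>(\<Union>i<l. S \<inter> {a i, b i}). \<Prod>k<l. pair_sign k (S - {x}) else 0)"
    by simp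
  also have "\<dots> = 0"
    using sum_prod_pair_sign_eq_0[of "\<lambda>i. S \<inter> {a i, b i}" "\<lambda>x. S - {x}" S]
    by (simp add: pair_sign_remove sum_pair_sign_remove)
  finally have paired_part: "(\<Sum>x\<in>(\<Union>i<l. S \<inter> {a i, b i}). rho_expl j (S - {x})) = 0" .
  have disj: "(S \<inter> singles) \<inter> (\<Union>i<l. S \<inter> {a i, b i}) = {}"
    using singles_paired_disjoint by (auto simp: paired_def)
  have "rmul (omega m) (rho_expl j) S
      = (\<Sum>x\<in>S \<inter> singles. rho_expl j (S - {x})) + (\<Sum>x\<in>(\<Union>i<l. S \<inter> {a i, b i}). rho_expl j (S - {x}))"
    unfolding rmul_omega[OF fS] S_split by (rule sum.union_disjoint) (use fS disj in auto)
  also have "\<dots> = of_nat (Suc j) * rho_expl (Suc j) S"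
    using singles_part paired_part S_range by (auto simp: rho_expl_def P_def c_def)
  finally show ?thesis .
qed

definition pairs_product :: "nat set \<Rightarrow> nat set \<Rightarrow> complex" where
  "pairs_product I S = (if S \<subseteq> (\<Union>k\<in>I. {a k, b k}) then \<Prod>k\<in>I. pair_sign k S else 0)"

lemma rmul_pair_pairs_product:
  assumes i: "i < l" "i \<notin> I" and I: "I \<subseteq> {..<l}"
  shows "rmul (\<lambda>S. yv (a i) S - yv (b i) S) (pairs_product I) S = pairs_product (insert i I) S"
proof (cases "finite S")
  case False
  have "finite (\<Union>k\<in>insert i I. {a k, b k})" using I finite_subset by blast
  then show ?thesis using False finite_subset by (auto simp: rmul_infinite pairs_product_def)
next
  case fS: True
  define P where "P = (\<Union>k\<in>I. {a k, b k})"
  have finI: "finite I" using I finite_subset by blast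
  have disj: "x \<notin> {a k, b k}" if "x \<in> {a i, b i}" "k \<in> I" for x k
  proof -
    have "k < l" "i \<noteq> k" using that(2) i I by auto
    then show ?thesis using pairs_disjoint[of i k] that(1) i by auto
  qed
  then have ai: "a i \<notin> P" and bi: "b i \<notin> P" by (auto simp: P_def)
  have prod_I: "(\<Prod>k\<in>I. pair_sign k (S - {x})) = (\<Prod>k\<in>I. pair_sign k S)" if "x \<in> {a i, b i}" for x
    using disj[OF that] by (intro prod.cong refl pair_sign_remove)
  have ab: "a i \<noteq> b i" using a_less_b[OF i(1)] by simp
  have "rmul (\<lambda>S. yv (a i) S - yv (b i) S) (pairs_product I) S
      = (if a i \<in> S then pairs_product I (S - {a i}) else 0) - (if b i \<in> S then pairs_product I (S - {b i}) else 0)"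
    by (simp add: rmul_diff_left rmul_yv fS)
  also have "\<dots> = pairs_product (insert i I) S"
  proof (cases "a i \<in> S"; cases "b i \<in> S")
    assume S: "a i \<in> S" "b i \<in> S"
    then have "pair_sign i S = 0" "\<not> S - {a i} \<subseteq> P" "\<not> S - {b i} \<subseteq> P"
      using ai bi ab by (auto simp: pair_sign_def)
    then show ?thesis using S i finI by (simp add: pairs_product_def P_def[symmetric])
  next
    assume "a i \<in> S" "b i \<notin> S"
    then show ?thesis using prod_I[of "a i"] i finI
      by (auto simp: pairs_product_def P_def[symmetric] pair_sign_def)
  next
    assume "a i \<notin> S" "b i \<in> S"
    then show ?thesis using prod_I[of "b i"] i finI ab
      by (auto simp: pairs_product_def P_def[symmetric] pair_sign_def)
  next
    assume "a i \<notin> S" "b i \<notin> S"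
    then show ?thesis using i finI by (auto simp: pairs_product_def pair_sign_def)
  qed
  finally show ?thesis .
qed

lemma foldr_factors_pairs_product:
  "distinct is \<Longrightarrow> set is \<subseteq> {..<l} \<Longrightarrow>
   foldr (\<lambda>i acc. rmul (\<lambda>S. yv (T!i!0) S - yv (T!i!1) S) acc) is rone = pairs_product (set is)"
proof (induct "is")
  case Nil
  show ?case by (simp add: pairs_product_def rone_def fun_eq_iff)
next
  case (Cons i js)
  then have "foldr (\<lambda>i acc. rmul (\<lambda>S. yv (T!i!0) S - yv (T!i!1) S) acc) (i # js) rone
      = rmul (\<lambda>S. yv (a i) S - yv (b i) S) (pairs_product (set js))"
    by (simp add: a_def b_def)
  also have "\<dots> = pairs_product (set (i # js))"
    using Cons.prems by (simp add: fun_eq_iff rmul_pair_pairs_product)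
  finally show ?case .
qed

lemma VT_eq_rho_expl: "VT l T = rho_expl 0"
proof
  fix S
  have "S \<subseteq> paired \<longleftrightarrow> S \<subseteq> {1..m} \<and> card (S \<inter> singles) = 0"
    using range_eq_singles_paired singles_paired_disjoint finite_subset[of "S \<inter> singles" singles]
    by (auto simp: singles_def)
  then show "VT l T S = rho_expl 0 S"
    using foldr_factors_pairs_product[of "[0..<l]"]
    by (simp add: VT_def pairs_product_def rho_expl_def paired_def atLeast0LessThan)
qed

lemma rmul_rpow_omega_VT: "rmul (rpow (omega m) j) (VT l T) = (\<lambda>S. fact j * rho_expl j S)"
proof (induct j)
  case 0
  show ?case by (simp add: rpow_def VT_eq_rho_expl rmul_rone_left rho_expl_infinite)
next
  case (Suc j)
  have "rmul (rpow (omega m) (Suc j)) (VT l T) = rmul (omega m) (\<lambda>S. fact j * rho_expl j S)"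
    by (simp add: rpow_Suc rmul_assoc Suc)
  also have "\<dots> = (\<lambda>S. fact (Suc j) * rho_expl (Suc j) S)"
    by (simp add: rmul_scale_right rmul_omega_rho_expl fun_eq_iff)
  finally show ?case .
qed

end

lemma rho_eq_rho_expl: "T \<in> tabl m l \<Longrightarrow> 2 * l \<le> m \<Longrightarrow> rho m (l, j, T) = tableau.rho_expl m l T j"
  by (simp add: rho_def tableau.rmul_rpow_omega_VT tableau_def fun_eq_iff)

section \<open>The lowering operator\<close>

text \<open>\<open>lower m\<close> is \<open>\<Sum>\<^sub>x \<partial>/\<partial>y\<^sub>x\<close> on \<open>R\<close>.\<close>

definition lower :: "nat \<Rightarrow> (nat set \<Rightarrow> complex) \<Rightarrow> nat set \<Rightarrow> complex" where
  "lower m f S = (\<Sum>x\<in>{1..m} - S. f (insert x S))"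

lemma lower_lincomb: "lower m (lincomb c I v) = lincomb c I (\<lambda>k. lower m (v k))"
  unfolding lower_def lincomb_def by (rule ext) (simp add: sum_distrib_left sum.swap[where B = I])

lemma funpow_lower_lincomb: "(lower m ^^ r) (lincomb c I v) = lincomb c I (\<lambda>k. (lower m ^^ r) (v k))"
  by (induct r) (simp_all add: lower_lincomb)

lemma lower_scale: "lower m (\<lambda>S. c * f S) = (\<lambda>S. c * lower m f S)"
  by (simp add: lower_def fun_eq_iff sum_distrib_left)

lemma funpow_lower_zero: "(lower m ^^ r) (\<lambda>S. 0) = (\<lambda>S. 0)"
  by (induct r) (simp_all add: lower_def)

context tableau
begin

lemma lower_rho_expl:
  "lower m (rho_expl j) S = (if j = 0 then 0 else of_nat (m - 2 * l + 1 - j) * rho_expl (j - 1) S)"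
proof (cases "S \<subseteq> {1..m}")
  case False
  then show ?thesis by (auto simp: lower_def rho_expl_def)
next
  case S_range: True
  then have fS: "finite S" using finite_subset by blast
  define P where "P = (\<Prod>i<l. pair_sign i S)"
  define c where "c = card (S \<inter> singles)"
  have "rho_expl j (insert x S) = (if Suc c = j then P else 0)" if x: "x \<in> singles - S" for x
  proof -
    have "card (insert x S \<inter> singles) = Suc c"
      using x fS by (simp add: c_def Int_insert_left)
    moreover have "x \<notin> {a i, b i}" if "i < l" for i using x single_not_in_pair that by blast
    moreover have "x \<in> {1..m}" using x range_eq_singles_paired by blast
    ultimately show ?thesis using S_range by (auto simp: rho_expl_def P_def pair_sign_insert)
  qed
  then have singles_part:
    "(\<Sum>x\<in>singles - S. rho_expl j (insert x S)) = of_nat (card (singles - S)) * (if Suc c = j then P else 0)"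
    by simp
  have "rho_expl j (insert x S) = (if c = j then \<Prod>i<l. pair_sign i (insert x S) else 0)"
    if "x \<in> (\<Union>i<l. {a i, b i} - S)" for x
  proof -
    have "x \<notin> singles" "x \<in> {1..m}"
      using that single_not_in_pair range_eq_singles_paired by (auto simp: paired_def)
    then show ?thesis using S_range by (auto simp: rho_expl_def c_def)
  qed
  then have "(\<Sum>x\<in>(\<Union>i<l. {a i, b i} - S). rho_expl j (insert x S))
      = (if c = j then \<Sum>x\<in>(\<Union>i<l. {a i, b i} - S). \<Prod>k<l. pair_sign k (insert x S) else 0)"
    by simp
  also have "\<dots> = 0"
    using sum_prod_pair_sign_eq_0[of "\<lambda>i. {a i, b i} - S" "\<lambda>x. insert x S" S]
    by (simp add: pair_sign_insert sum_pair_sign_insert)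
  finally have paired_part: "(\<Sum>x\<in>(\<Union>i<l. {a i, b i} - S). rho_expl j (insert x S)) = 0" .
  have split: "{1..m} - S = (singles - S) \<union> (\<Union>i<l. {a i, b i} - S)"
    using range_eq_singles_paired by (auto simp: paired_def)
  have disj: "(singles - S) \<inter> (\<Union>i<l. {a i, b i} - S) = {}"
    using singles_paired_disjoint by (auto simp: paired_def)
  have "card (singles - S) = card singles - card (singles \<inter> S)"
    by (rule card_Diff_subset_Int) (simp add: singles_def)
  then have card: "card (singles - S) = m - 2 * l - c" by (simp add: card_singles c_def Int_commute)
  have "lower m (rho_expl j) S
      = (\<Sum>x\<in>singles - S. rho_expl j (insert x S)) + (\<Sum>x\<in>(\<Union>i<l. {a i, b i} - S). rho_expl j (insert x S))"
    unfolding lower_def split by (rule sum.union_disjoint) (use disj in \<open>auto simp: singles_def\<close>)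
  also have "\<dots> = of_nat (m - 2 * l - c) * (if Suc c = j then P else 0)"
    by (simp only: singles_part paired_part card) simp
  also have "\<dots> = (if j = 0 then 0 else of_nat (m - 2 * l + 1 - j) * rho_expl (j - 1) S)"
    using S_range by (cases "j = Suc c") (auto simp: rho_expl_def P_def c_def)
  finally show ?thesis .
qed

lemma funpow_lower_rho_expl:
  "k \<le> j \<Longrightarrow> (lower m ^^ k) (rho_expl j)
     = (\<lambda>S. (\<Prod>t<k. of_nat (m - 2 * l + 1 - (j - t))) * rho_expl (j - k) S)"
proof (induct k)
  case (Suc k)
  have "(lower m ^^ Suc k) (rho_expl j)
      = (\<lambda>S. (\<Prod>t<k. of_nat (m - 2 * l + 1 - (j - t))) * lower m (rho_expl (j - k)) S)"
    using Suc by (simp add: lower_scale)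
  also have "\<dots> = (\<lambda>S. (\<Prod>t<Suc k. of_nat (m - 2 * l + 1 - (j - t))) * rho_expl (j - Suc k) S)"
  proof
    fix S
    have "j - k \<noteq> 0" "j - k - 1 = j - Suc k" using Suc.prems by auto
    then show "(\<Prod>t<k. of_nat (m - 2 * l + 1 - (j - t))) * lower m (rho_expl (j - k)) S
        = (\<Prod>t<Suc k. of_nat (m - 2 * l + 1 - (j - t))) * rho_expl (j - Suc k) S"
      by (simp add: lower_rho_expl)
  qed
  finally show ?case .
qed simp

lemma funpow_lower_rho_expl_eq_0: "j < k \<Longrightarrow> (lower m ^^ k) (rho_expl j) = (\<lambda>S. 0)"
proof -
  assume "j < k"
  then have "k = (k - Suc j) + Suc j" by simp
  then have "(lower m ^^ k) (rho_expl j) = (lower m ^^ (k - Suc j)) (lower m ((lower m ^^ j) (rho_expl j)))"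
    by (metis funpow_add funpow.simps(2) comp_apply)
  then show ?thesis
    by (simp add: funpow_lower_rho_expl lower_scale lower_rho_expl funpow_lower_zero)
qed

end

section \<open>Linear independence\<close>

context tableau
begin

lemma card_second_column: "card second_column = l"
proof -
  have "inj_on b {..<l}" by (meson b_inj inj_onI lessThan_iff)
  then show ?thesis by (simp add: second_column_def card_image)
qed

lemma rho_expl_0_second_column: "rho_expl 0 second_column = (-1) ^ l"
proof -
  have "second_column \<inter> singles = {}"
    using single_not_in_pair by (auto simp: second_column_def)
  moreover have "pair_sign i second_column = -1" if "i < l" for i
    using that a_neq_b[of i] l_less_eq by (auto simp: pair_sign_def second_column_def)
  ultimately show ?thesis using b_in_range by (auto simp: rho_expl_def second_column_def)
qed

lemma rho_expl_0_leading_monomial: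
  assumes nz: "rho_expl 0 S \<noteq> 0"
  shows "\<Sum>S \<le> \<Sum>second_column \<and> (\<Sum>S = \<Sum>second_column \<longrightarrow> S = second_column)"
proof -
  have S_range: "S \<subseteq> {1..m}" and "card (S \<inter> singles) = 0" and "\<forall>i<l. pair_sign i S \<noteq> 0"
    using nz by (auto simp: rho_expl_def split: if_splits)
  then have "S \<inter> singles = {}" and one_of_pair: "\<And>i. i < l \<Longrightarrow> a i \<in> S \<longleftrightarrow> b i \<notin> S"
    by (auto simp: singles_def pair_sign_def split: if_splits)
  define pick where "pick i = (if a i \<in> S then a i else b i)" for i
  have S_paired: "S \<subseteq> paired"
    using S_range \<open>S \<inter> singles = {}\<close> range_eq_singles_paired by blast
  have S_eq: "S = pick ` {..<l}"
  proof
    show "S \<subseteq> pick ` {..<l}"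
    proof
      fix x assume "x \<in> S"
      moreover obtain i where "i < l" "x = a i \<or> x = b i"
        using S_paired \<open>x \<in> S\<close> by (auto simp: paired_def)
      ultimately show "x \<in> pick ` {..<l}"
        using one_of_pair[of i] by (auto simp: pick_def)
    qed
    show "pick ` {..<l} \<subseteq> S" using one_of_pair by (auto simp: pick_def)
  qed
  have "inj_on pick {..<l}"
  proof (rule inj_onI)
    fix i i' assume "i \<in> {..<l}" "i' \<in> {..<l}" "pick i = pick i'"
    then show "i = i'"
      using a_inj[of i i'] b_inj[of i i'] a_neq_b[of i i'] a_neq_b[of i' i] l_less_eq
      by (auto simp: pick_def split: if_splits)
  qed
  then have sum_S: "\<Sum>S = (\<Sum>i<l. pick i)" by (simp add: S_eq sum.reindex)
  have "inj_on b {..<l}" by (meson b_inj inj_onI lessThan_iff)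
  then have sum_B: "\<Sum>second_column = (\<Sum>i<l. b i)" by (simp add: second_column_def sum.reindex)
  have pick_le: "pick i \<le> b i" if "i < l" for i using a_less_b[OF that] by (simp add: pick_def)
  have "S = second_column" if "(\<Sum>i<l. pick i) = (\<Sum>i<l. b i)"
  proof -
    have "\<forall>i<l. pick i = b i"
    proof (rule ccontr)
      assume "\<not> (\<forall>i<l. pick i = b i)"
      then obtain i where "i < l" "pick i < b i" using pick_le le_neq_implies_less by blast
      then have "(\<Sum>i<l. pick i) < (\<Sum>i<l. b i)" using pick_le by (intro sum_strict_mono_ex1) auto
      then show False using that by simp
    qed
    then show ?thesis by (simp add: S_eq second_column_def)
  qed
  moreover have "(\<Sum>i<l. pick i) \<le> (\<Sum>i<l. b i)" by (rule sum_mono) (simp add: pick_le)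
  ultimately show ?thesis using sum_S sum_B by simp
qed

lemma sorted_first_column: "sorted_wrt (<) (map a [0..<m-l])"
proof -
  have "a i < a (Suc i)" if "Suc i < m - l" for i
    using column_increasing[OF that, of 0] length_row[OF that] by (simp add: a_def split: if_splits)
  then show ?thesis by (simp add: sorted_wrt_iff_nth_Suc_transp)
qed

lemma sorted_second_column: "sorted_wrt (<) (map b [0..<l])"
proof -
  have "b i < b (Suc i)" if "Suc i < l" for i
    using column_increasing[of i 1] length_row[of "Suc i"] that l_less_eq by (simp add: b_def)
  then show ?thesis by (simp add: sorted_wrt_iff_nth_Suc_transp)
qed

lemma set_first_column: "set (map a [0..<m-l]) = {1..m} - second_column"
  using range_eq_columns a_neq_b by (auto simp: second_column_def atLeast0LessThan)

end

lemma tableau_eq_if_second_column_eq: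
  assumes T: "tableau m l T" and T': "tableau m l' T'"
    and eq: "tableau.second_column l T = tableau.second_column l' T'"
  shows "l = l' \<and> T = T'"
proof -
  interpret t: tableau m l T by (rule T)
  interpret t': tableau m l' T' by (rule T')
  have l: "l = l'" using t.card_second_column t'.card_second_column eq by simp
  have first: "map t.a [0..<m-l] = map t'.a [0..<m-l]"
    using t.sorted_first_column t'.sorted_first_column t.set_first_column t'.set_first_column eq l
    by (intro strict_sorted_equal) auto
  have "t.b ` {..<l} = t'.b ` {..<l}"
    using eq unfolding t.second_column_def t'.second_column_def by (simp add: l)
  then have second: "map t.b [0..<l] = map t'.b [0..<l]"
    using t.sorted_second_column t'.sorted_second_column l
    by (intro strict_sorted_equal) (simp_all add: atLeast0LessThan)
  have "T = T'"
  proof (rule nth_equalityI)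
    show "length T = length T'" using t.length_T t'.length_T l by simp
    fix i assume "i < length T"
    then have i: "i < m - l" using t.length_T by simp
    show "T!i = T'!i"
    proof (rule nth_equalityI)
      show "length (T!i) = length (T'!i)" using t.length_row[OF i] t'.length_row i l by simp
      fix k assume "k < length (T!i)"
      then have "k = 0 \<or> k = 1 \<and> i < l" using t.length_row[OF i] by (auto split: if_splits)
      then show "T!i!k = T'!i!k"
        using first second i by (auto simp: t.a_def t'.a_def t.b_def t'.b_def)
    qed
  qed
  with l show ?thesis ..
qed

lemma le_half_iff: "(l::nat) \<le> m div 2 \<longleftrightarrow> 2 * l \<le> m" by presburger

lemma tableau_if_in_SIGMA: "(l, T) \<in> (SIGMA l:{..m div 2}. tabl m l) \<Longrightarrow> tableau m l T"
  by (simp add: tableau_def le_half_iff)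

text \<open>Among the tableaux with nonzero coefficient, take one whose second column has maximal sum;
  its leading monomial occurs in no other \<open>V\<^sub>T\<close> of the combination.\<close>

lemma lin_indep_VT: "lin_indep (SIGMA l:{..m div 2}. tabl m l) (\<lambda>(l, T). VT l T)"
  unfolding lin_indep_def
proof (intro conjI allI impI ballI)
  let ?I = "SIGMA l:{..m div 2}. tabl m l"
  show fin: "finite ?I" by (simp add: finite_tabl)
  fix d k assume lc: "lincomb d ?I (\<lambda>(l, T). VT l T) = (\<lambda>S. 0)" and k: "k \<in> ?I"
  show "d k = 0"
  proof (rule ccontr)
    assume "d k \<noteq> 0"
    define M where "M = {x \<in> ?I. d x \<noteq> 0}"
    define weight where "weight x = \<Sum>(tableau.second_column (fst x) (snd x))" for x
    have "finite M" "M \<noteq> {}" using fin k \<open>d k \<noteq> 0\<close> by (auto simp: M_def)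
    then obtain x0 where x0: "x0 \<in> M" and max: "\<And>x. x \<in> M \<Longrightarrow> weight x \<le> weight x0"
      using Max_in[of "weight ` M"] Max_ge[of "weight ` M"] by fastforce
    obtain l0 T0 where lT0: "x0 = (l0, T0)" by (cases x0)
    have x0_I: "x0 \<in> ?I" and "d x0 \<noteq> 0" using x0 by (auto simp: M_def)
    interpret t0: tableau m l0 T0 using x0_I lT0 tableau_if_in_SIGMA by simp
    have others: "d x * VT (fst x) (snd x) t0.second_column = 0" if x: "x \<in> ?I" "x \<noteq> x0" for x
    proof (rule ccontr)
      assume nz: "d x * VT (fst x) (snd x) t0.second_column \<noteq> 0"
      obtain l T where lT: "x = (l, T)" by (cases x)
      interpret t: tableau m l T using x lT tableau_if_in_SIGMA by simp
      have "x \<in> M" using nz x by (auto simp: M_def)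
      then have "\<Sum>t.second_column \<le> \<Sum>t0.second_column" using max[of x] by (simp add: weight_def lT lT0)
      moreover have "t.rho_expl 0 t0.second_column \<noteq> 0" using nz by (simp add: lT t.VT_eq_rho_expl)
      ultimately have "t0.second_column = t.second_column"
        using t.rho_expl_0_leading_monomial by fastforce
      then have "l0 = l \<and> T0 = T"
        by (intro tableau_eq_if_second_column_eq) (unfold_locales)
      then show False using x lT lT0 by simp
    qed
    have "lincomb d ?I (\<lambda>(l, T). VT l T) t0.second_column
        = d x0 * VT (fst x0) (snd x0) t0.second_column
          + (\<Sum>x\<in>?I - {x0}. d x * VT (fst x) (snd x) t0.second_column)"
      unfolding lincomb_def case_prod_beta by (rule sum.remove[OF fin x0_I])
    also have "(\<Sum>x\<in>?I - {x0}. d x * VT (fst x) (snd x) t0.second_column) = 0"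
      using others by (intro sum.neutral) blast
    also have "d x0 * VT (fst x0) (snd x0) t0.second_column = d x0 * (-1) ^ l0"
      by (simp add: lT0 t0.VT_eq_rho_expl t0.rho_expl_0_second_column)
    finally show False using lc \<open>d x0 \<noteq> 0\<close> by (simp add: fun_eq_iff)
  qed
qed

lemma tableau_if_in_idx: "(l, j, T) \<in> idx m \<Longrightarrow> tableau m l T \<and> j \<le> m - 2 * l"
  by (simp add: idx_def tableau_def le_half_iff)

lemma idx_eq_image:
  "idx m = (\<lambda>((l, T), j). (l, j, T)) ` (SIGMA x:(SIGMA l:{..m div 2}. tabl m l). {..m - 2 * fst x})"
  by (force simp: idx_def image_iff)

lemma finite_idx: "finite (idx m)"
  by (simp add: idx_eq_image finite_tabl)

lemma sum_idx:
  "sum f (idx m) = (\<Sum>(l, T)\<in>(SIGMA l:{..m div 2}. tabl m l). \<Sum>j\<le>m - 2 * l. f (l, j, T))"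
proof -
  have "inj_on (\<lambda>((l, T), j). (l, j, T)) A" for A :: "((nat \<times> nat list list) \<times> nat) set"
    by (auto simp: inj_on_def)
  then show ?thesis
    by (simp add: idx_eq_image sum.reindex sum.Sigma finite_tabl split_def)
qed

lemma funpow_lower_rho:
  assumes "(l, j', T) \<in> idx m" and "j' \<le> j"
  shows "(lower m ^^ j) (rho m (l, j', T))
           = (\<lambda>S. if j' = j then (\<Prod>t<j. of_nat (m - 2 * l + 1 - (j - t))) * VT l T S else 0)"
proof -
  interpret tableau m l T using assms(1) tableau_if_in_idx by blast
  have "rho m (l, j', T) = rho_expl j'" using rho_eq_rho_expl T_in_tabl two_rows_fit by simp
  then show ?thesis using assms(2)
    by (cases "j' = j") (simp_all add: funpow_lower_rho_expl VT_eq_rho_expl funpow_lower_rho_expl_eq_0)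
qed

lemma prod_diff_factors_neq_0: "j \<le> n \<Longrightarrow> (\<Prod>t<j. of_nat (n + 1 - (j - t)) :: complex) \<noteq> 0"
proof -
  assume "j \<le> n"
  then have "(\<Prod>t<j. n + 1 - (j - t)) \<noteq> 0" by (auto simp: prod_zero_iff)
  then show ?thesis by (metis of_nat_0_eq_iff of_nat_prod)
qed

lemma lin_indep_rho: "lin_indep (idx m) (rho m)"
  unfolding lin_indep_def
proof (intro conjI allI impI ballI)
  show "finite (idx m)" by (rule finite_idx)
next
  fix c k assume lc: "lincomb c (idx m) (rho m) = (\<lambda>S. 0)" and k: "k \<in> idx m"
  have "c (l, j, T) = 0" if "(l, j, T) \<in> idx m" for l j T
    using that
  proof (induct "m - j" arbitrary: j l T rule: less_induct)
    case less
    define K where "K l = (\<Prod>t<j. of_nat (m - 2 * l + 1 - (j - t)) :: complex)" for l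
    have lowered: "c x * (lower m ^^ j) (rho m x) S
        = (if fst (snd x) = j then c x * K (fst x) * VT (fst x) (snd (snd x)) S else 0)"
      if x: "x \<in> idx m" for x S
    proof (cases "fst (snd x) \<le> j")
      case False
      then have "c x = 0" using less.hyps x by (cases x) (fastforce simp: idx_def)
      then show ?thesis by simp
    qed (use x funpow_lower_rho[of "fst x" "fst (snd x)" "snd (snd x)" m j] in \<open>simp add: K_def\<close>)
    define d where "d = (\<lambda>(l, T). if j \<le> m - 2 * l then c (l, j, T) * K l else 0)"
    have "lincomb d (SIGMA l:{..m div 2}. tabl m l) (\<lambda>(l, T). VT l T) S = 0" for S
    proof -
      have "0 = lincomb c (idx m) (\<lambda>x. (lower m ^^ j) (rho m x)) S"
        using lc by (metis funpow_lower_lincomb funpow_lower_zero)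
      also have "\<dots> = (\<Sum>x\<in>idx m. if fst (snd x) = j then c x * K (fst x) * VT (fst x) (snd (snd x)) S else 0)"
        unfolding lincomb_def by (rule sum.cong) (simp_all add: lowered)
      also have "\<dots> = lincomb d (SIGMA l:{..m div 2}. tabl m l) (\<lambda>(l, T). VT l T) S"
        by (simp add: sum_idx lincomb_def d_def split_beta if_distrib[of "\<lambda>c. c * _"] cong: if_cong)
      finally show ?thesis by simp
    qed
    then have "lincomb d (SIGMA l:{..m div 2}. tabl m l) (\<lambda>(l, T). VT l T) = (\<lambda>S. 0)" ..
    moreover have "(l, T) \<in> (SIGMA l:{..m div 2}. tabl m l)" and j: "j \<le> m - 2 * l"
      using less.prems by (simp_all add: idx_def)
    ultimately have "c (l, j, T) * K l = 0" using lin_indep_VT[of m] unfolding lin_indep_def d_def by force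
    then show ?case using prod_diff_factors_neq_0[OF j] by (simp add: K_def)
  qed
  then show "c k = 0" using k by (cases k) simp
qed

section \<open>Counting the index set\<close>

context tableau
begin

lemma append_single_in_tabl: "T @ [[Suc m]] \<in> tabl (Suc m) l"
  unfolding tabl_def mem_Collect_eq
proof (intro conjI allI impI; (elim conjE)?)
  show "length (T @ [[Suc m]]) = Suc m - l" using length_T two_rows_fit by simp
  show "length ((T @ [[Suc m]])!i) = (if i < l then 2 else 1)" if "i < length (T @ [[Suc m]])" for i
    using that length_row[of i] length_T l_less_eq by (cases "i < m - l") (auto simp: nth_append)
  show "distinct (concat (T @ [[Suc m]]))" using distinct_entries set_entries by auto
  show "set (concat (T @ [[Suc m]])) = {1..Suc m}" using set_entries by auto
  show "(T @ [[Suc m]])!i!0 < (T @ [[Suc m]])!i!1" if "i < l" for i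
    using that a_less_b l_less_eq length_T by (simp add: nth_append a_def b_def)
  show "(T @ [[Suc m]])!i!k < (T @ [[Suc m]])!Suc i!k"
    if "Suc i < length (T @ [[Suc m]])" "k < length ((T @ [[Suc m]])!Suc i)" for i k
  proof (cases "Suc i < m - l")
    case True
    then show ?thesis using that column_increasing length_T by (simp add: nth_append)
  next
    case False
    then have "Suc i = m - l" "k = 0" using that length_T two_rows_fit by (auto simp: nth_append)
    then show ?thesis using a_in_range[of i] length_T by (simp add: nth_append a_def)
  qed
qed

lemma extend_row_in_tabl:
  assumes "2 * l < m" shows "T[l := [a l, Suc m]] \<in> tabl (Suc m) (Suc l)"
proof -
  let ?T = "T[l := [a l, Suc m]]"
  have l: "l < m - l" using assms by simp
  have row_l: "T!l = [a l]" using length_row[OF l] by (cases "T!l") (auto simp: a_def)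
  have nth_T: "?T!i = (if i = l then [a l, Suc m] else T!i)" if "i < m - l" for i
    using that length_T by simp
  define A C where "A = concat (take l T)" and "C = concat (drop (Suc l) T)"
  have "concat T = A @ a l # C"
    using id_take_nth_drop[of l T] l length_T row_l unfolding A_def C_def
    by (metis append_Cons append_Nil concat.simps concat_append)
  then have old_set: "set (A @ a l # C) = {1..m}" and old_distinct: "distinct (A @ a l # C)"
    using set_entries distinct_entries by simp_all
  have concat_T': "concat ?T = A @ a l # Suc m # C"
    using upd_conv_take_nth_drop[of l T "[a l, Suc m]"] l length_T by (simp add: A_def C_def)
  have rows: "length (?T!i) = (if i < Suc l then 2 else 1)" if "i < length ?T" for i
    using that length_row[of i] nth_T[of i] length_T by auto
  have "Suc m \<notin> set (A @ a l # C)" using old_set by simp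
  then have dist: "distinct (concat ?T)" and entries: "set (concat ?T) = {1..Suc m}"
    using old_distinct old_set a_in_range[OF l] unfolding concat_T' by auto
  have a_l: "a l \<in> {1..m}" using a_in_range[OF l] .
  have increasing: "?T!i!0 < ?T!i!1" if "i < Suc l" for i
    using that a_l a_less_b[of i] nth_T[of i] l by (cases "i = l") (auto simp: a_def b_def)
  have columns: "?T!i!k < ?T!Suc i!k" if "Suc i < length ?T" "k < length (?T!Suc i)" for i k
  proof -
    have si: "Suc i < m - l" and i: "i < m - l" using that(1) length_T by auto
    have "length (T!Suc i) \<noteq> 0" using length_row[OF si] by simp
    then have nonempty: "T!Suc i \<noteq> []" by auto
    consider "Suc i = l" | "i = l" | "i \<noteq> l" "Suc i \<noteq> l" by blast
    then show ?thesis
    proof cases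
      case 1
      then have "k = 0 \<or> k = 1" using that(2) nth_T[OF si] by auto
      then show ?thesis
        using 1 nth_T[OF si] nth_T[OF i] column_increasing[OF si, of 0] nonempty b_in_range[of i]
        by (auto simp: a_def b_def)
    next
      case 2
      then have "k = 0" using that(2) nth_T[OF si] length_row[OF si] by auto
      then show ?thesis
        using 2 nth_T[OF si] nth_T[OF i] column_increasing[OF si, of 0] nonempty
        by (auto simp: a_def)
    next
      case 3
      then show ?thesis using nth_T[OF si] nth_T[OF i] column_increasing[OF si] that(2) by simp
    qed
  qed
  have "length ?T = Suc m - Suc l" using length_T by simp
  then show ?thesis
    unfolding tabl_def mem_Collect_eq using rows dist entries increasing columns by blast
qed

end

text \<open>Two injections \<open>idx m \<rightarrow> idx (m + 1)\<close> with disjoint images, mirroring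
  \<open>R\<^bsub>m+1\<^esub> = R\<^sub>m \<otimes> \<complex>[y\<^bsub>m+1\<^esub>]/(y\<^bsub>m+1\<^esub>\<^sup>2)\<close>.\<close>

definition add_single :: "nat \<Rightarrow> nat \<times> nat \<times> nat list list \<Rightarrow> nat \<times> nat \<times> nat list list" where
  "add_single m = (\<lambda>(l, j, T). (l, j, T @ [[Suc m]]))"

definition add_box :: "nat \<Rightarrow> nat \<times> nat \<times> nat list list \<Rightarrow> nat \<times> nat \<times> nat list list" where
  "add_box m = (\<lambda>(l, j, T). if j = m - 2 * l then (l, Suc j, T @ [[Suc m]])
                           else (Suc l, j, T[l := [T!l!0, Suc m]]))"

lemma add_single_in_idx: "x \<in> idx m \<Longrightarrow> add_single m x \<in> idx (Suc m)"
proof -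
  assume "x \<in> idx m"
  moreover obtain l j T where x: "x = (l, j, T)" by (cases x)
  ultimately have t: "tableau m l T" and "j \<le> m - 2 * l" using tableau_if_in_idx by auto
  then show ?thesis using tableau.append_single_in_tabl[OF t] tableau.two_rows_fit[OF t]
    by (simp add: x add_single_def idx_def le_half_iff)
qed

lemma add_box_in_idx: "x \<in> idx m \<Longrightarrow> add_box m x \<in> idx (Suc m)"
proof -
  assume "x \<in> idx m"
  moreover obtain l j T where x: "x = (l, j, T)" by (cases x)
  ultimately have "tableau m l T" and j: "j \<le> m - 2 * l" using tableau_if_in_idx by auto
  then interpret tableau m l T by simp
  show ?thesis
  proof (cases "j = m - 2 * l")
    case True
    then show ?thesis using append_single_in_tabl two_rows_fit
      by (simp add: x add_box_def idx_def le_half_iff)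
  next
    case False
    then have "2 * l < m" using j by simp
    then show ?thesis using extend_row_in_tabl False j
      by (simp add: x add_box_def idx_def le_half_iff a_def)
  qed
qed

lemma append_single_neq_extend_row:
  assumes "tableau m (Suc l) T" "tableau m l T'" "2 * l < m"
  shows "T @ [[Suc m]] \<noteq> T'[l := [T'!l!0, Suc m]]"
proof -
  interpret t: tableau m "Suc l" T by fact
  interpret t': tableau m l T' by fact
  have "l < length T" using t.length_T t.two_rows_fit by simp
  then have "(T @ [[Suc m]])!l!1 = t.b l" by (simp add: nth_append t.b_def)
  moreover have "T'[l := [T'!l!0, Suc m]]!l!1 = Suc m" using t'.length_T assms(3) by simp
  ultimately show ?thesis using t.b_in_range[of l] by auto
qed

lemma inj_on_add_single: "inj_on (add_single m) (idx m)"
  by (auto simp: inj_on_def add_single_def)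

lemma inj_on_add_box: "inj_on (add_box m) (idx m)"
proof (rule inj_onI)
  fix x x' assume x: "x \<in> idx m" and x': "x' \<in> idx m" and eq: "add_box m x = add_box m x'"
  obtain l j T l' j' T' where xs: "x = (l, j, T)" "x' = (l', j', T')" by (cases x, cases x')
  have t: "tableau m l T" "j \<le> m - 2 * l" and t': "tableau m l' T'" "j' \<le> m - 2 * l'"
    using tableau_if_in_idx x x' xs by auto
  have fits: "2 * l < m" if "j \<noteq> m - 2 * l" using t that by auto
  have fits': "2 * l' < m" if "j' \<noteq> m - 2 * l'" using t' that by auto
  have extended_eq: "T = T'" if "l = l'" "2 * l < m" "T[l := [T!l!0, Suc m]] = T'[l := [T'!l!0, Suc m]]"
  proof -
    interpret t: tableau m l T by fact
    interpret t': tableau m l T' using t' that(1) by simp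
    have l: "l < m - l" using that(2) by simp
    have "T!l = [T!l!0]" "T'!l = [T'!l!0]"
      using t.length_row[OF l] t'.length_row[OF l] by (auto simp: length_Suc_conv)
    moreover have "T!l!0 = T'!l!0" using arg_cong[OF that(3), of "\<lambda>T. T!l!0"] t.length_T t'.length_T l by simp
    ultimately have "T = T[l := [T!l!0, Suc m], l := T'!l]" by (metis list_update_id list_update_overwrite)
    also have "\<dots> = T'" using that(3) by simp
    finally show ?thesis .
  qed
  consider "j = m - 2 * l" "j' = m - 2 * l'" | "j = m - 2 * l" "j' \<noteq> m - 2 * l'"
    | "j \<noteq> m - 2 * l" "j' = m - 2 * l'" | "j \<noteq> m - 2 * l" "j' \<noteq> m - 2 * l'" by blast
  then show "x = x'"
  proof cases
    case 2
    then show ?thesis using eq t t' fits' append_single_neq_extend_row[of m l' T T']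
      by (auto simp: xs add_box_def)
  next
    case 3
    then show ?thesis using eq t t' fits append_single_neq_extend_row[of m l T' T]
      by (auto simp: xs add_box_def)
  next
    case 4
    then show ?thesis using eq t t' extended_eq by (auto simp: xs add_box_def)
  qed (use eq xs in \<open>auto simp: add_box_def\<close>)
qed

lemma add_single_add_box_disjoint: "add_single m ` idx m \<inter> add_box m ` idx m = {}"
proof -
  have "add_single m x \<noteq> add_box m x'" if x: "x \<in> idx m" and x': "x' \<in> idx m" for x x'
  proof -
    obtain l j T l' j' T' where xs: "x = (l, j, T)" "x' = (l', j', T')" by (cases x, cases x')
    have t: "tableau m l T" "j \<le> m - 2 * l" and t': "tableau m l' T'" "j' \<le> m - 2 * l'"
      using tableau_if_in_idx x x' xs by auto
    moreover have "2 * l' < m" if "j' \<noteq> m - 2 * l'" using t' that by auto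
    ultimately show ?thesis using append_single_neq_extend_row[of m l' T T']
      by (auto simp: xs add_single_def add_box_def)
  qed
  then show ?thesis by blast
qed

lemma card_idx_ge: "2 ^ m \<le> card (idx m)"
proof (induct m)
  case 0
  have "(0, 0, []) \<in> idx 0" by (simp add: idx_def tabl_def)
  then show ?case using finite_idx[of 0] by (auto simp: Suc_le_eq card_gt_0_iff)
next
  case (Suc m)
  have "card (add_single m ` idx m \<union> add_box m ` idx m) = 2 * card (idx m)"
    using inj_on_add_single inj_on_add_box add_single_add_box_disjoint finite_idx
    by (simp add: card_Un_disjoint card_image)
  moreover have "add_single m ` idx m \<union> add_box m ` idx m \<subseteq> idx (Suc m)"
    using add_single_in_idx add_box_in_idx by blast
  ultimately have "2 * card (idx m) \<le> card (idx (Suc m))"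
    by (metis card_mono finite_idx)
  then show ?case using Suc by simp
qed

lemma rho_in_Rm: "rho m ` idx m \<subseteq> Rm m"
  using rho_eq_rho_expl tableau.rho_expl_in_Rm tableau_if_in_idx
  by (force simp: tableau_def)

lemma cspan_rho_eq_Rm: "cspan (idx m) (rho m) = Rm m"
  using cspan_subset_Rm[OF rho_in_Rm] lin_indep_spans_Rm[OF lin_indep_rho rho_in_Rm card_idx_ge] by blast

lemma Rl_eq_cspan_rho: "Rl m l = cspan (idx_l m l) (rho m)"
proof -
  have "idx_l m l = (\<lambda>(j, T). (l, j, T)) ` {(j, T). j \<le> m - 2 * l \<and> T \<in> tabl m l}"
    by (auto simp: idx_l_def image_iff)
  moreover have "cspan ((\<lambda>(j, T). (l, j, T)) ` {(j, T). j \<le> m - 2 * l \<and> T \<in> tabl m l}) (rho m) = Rl m l"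
    unfolding Rl_def
    by (rule cspan_reindex_rescaled[where s = "\<lambda>(j, T). 1 / fact j"]) (auto simp: inj_on_def rho_def)
  ultimately show ?thesis by simp
qed

theorem mainTheorem7:
  fixes m :: nat
  assumes "m \<ge> 1"
  shows "is_basis_of (idx m) (rho m) (Rm m)
       \<and> (\<forall>l \<le> m div 2. is_basis_of (idx_l m l) (rho m) (Rl m l))"
proof
  show "is_basis_of (idx m) (rho m) (Rm m)"
    using lin_indep_is_basis_of_cspan[OF lin_indep_rho] cspan_rho_eq_Rm by simp
  show "\<forall>l \<le> m div 2. is_basis_of (idx_l m l) (rho m) (Rl m l)"
  proof (intro allI impI)
    fix l assume "l \<le> m div 2"
    then have "idx_l m l \<subseteq> idx m" by (auto simp: idx_l_def idx_def)
    then have "lin_indep (idx_l m l) (rho m)" by (rule lin_indep_subset[OF lin_indep_rho])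
    then show "is_basis_of (idx_l m l) (rho m) (Rl m l)"
      unfolding Rl_eq_cspan_rho by (rule lin_indep_is_basis_of_cspan)
  qed
qed

end
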